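(* Let $n\ge 1$, let $e,f$ be scalars, and let $A,B,C,D,M$ be $n\times n$ matrices. Then $d_{C,D}(M)-d_{A,B}(M)\le 1$ in each of the following cases: (1) $A=C$, $B=Z_e$, $D=Z_f$; (2) $A=C$, $B=Z_e^T$, $D=Z_f^T$; (3) $B=D$, $A=Z_e$, $C=Z_f$; (4) $B=D$, $A=Z_e^T$, $C=Z_f^T$.
   Context: For a scalar $f$, $Z_f$ denotes the $n\times n$ matrix of $f$-circular shift: $Z_f=\begin{pmatrix}\mathbf 0^T & f\\ I_{n-1} & \mathbf 0\end{pmatrix}$ (ones on the first subdiagonal, $f$ in the upper right corner, zeros elsewhere). For matrices $A,B,M$ of compatible sizes, the (Sylvester) displacement rank of $M$ with respect to the operator pair $(A,B)$ is $d_{A,B}(M)=\operatorname{rank}(AM-MB)$. *)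

theory Defs
  imports "Jordan_Normal_Form.DL_Rank"
begin

definition shift_mat :: "nat \<Rightarrow> 'a::field \<Rightarrow> 'a mat" where
  "shift_mat n f = mat n n (\<lambda>(i, j). if i = Suc j then 1
                                      else if i = 0 \<and> j = n - 1 then f else 0)"

definition disp_rank :: "nat \<Rightarrow> 'a::field mat \<Rightarrow> 'a mat \<Rightarrow> 'a mat \<Rightarrow> nat" where
  "disp_rank n A B M = vec_space.rank n (A * M - M * B)"

end

theory Submission
  imports Defs
begin

text \<open>Changing the shift parameter perturbs the displacement operator by a matrix whose entries
  factor as \<open>p i * q j\<close>: with \<open>A\<close> fixed, \<open>(A M - M Z\<^sub>f) - (A M - M Z\<^sub>e) = M (Z\<^sub>e - Z\<^sub>f)\<close>, and
  \<open>Z\<^sub>e - Z\<^sub>f\<close> has a single nonzero entry in its corner. Such outer-product matrices stay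
  outer products under multiplication by \<open>M\<close> on either side and have rank at most one, so
  subadditivity of rank bounds the change of the displacement rank by one. The transposed
  shifts and the left-hand operator are handled symmetrically.\<close>

definition is_outer_product :: "'a::comm_ring_1 mat \<Rightarrow> bool" where
  "is_outer_product X \<longleftrightarrow>
     (\<exists>p q. \<forall>i<dim_row X. \<forall>j<dim_col X. X $$ (i, j) = p i * q j)"

lemma rank_le_1_if_outer_product:
  fixes X :: "'a::field mat"
  assumes "X \<in> carrier_mat n nc" and "is_outer_product X"
  shows "vec_space.rank n X \<le> 1"
  using assms vec_space.rank_le_1_product_entries unfolding is_outer_product_def by metis

lemma is_outer_product_transpose:
  assumes "is_outer_product X"
  shows "is_outer_product (transpose_mat X)"
proof -
  obtain p q where X: "\<And>i j. i < dim_row X \<Longrightarrow> j < dim_col X \<Longrightarrow> X $$ (i, j) = p i * q j"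
    using assms unfolding is_outer_product_def by blast
  have "\<forall>i<dim_col X. \<forall>j<dim_row X. X $$ (j, i) = q i * p j"
    by (simp add: X mult.commute)
  then show ?thesis unfolding is_outer_product_def by auto
qed

lemma is_outer_product_mult_left:
  fixes M X :: "'a::comm_ring_1 mat"
  assumes M: "M \<in> carrier_mat m n" and X: "X \<in> carrier_mat n k" and "is_outer_product X"
  shows "is_outer_product (M * X)"
proof -
  obtain p q where pq: "\<And>i j. i < n \<Longrightarrow> j < k \<Longrightarrow> X $$ (i, j) = p i * q j"
    using assms(3) X unfolding is_outer_product_def by auto
  have "(M * X) $$ (i, j) = (\<Sum>l<n. M $$ (i, l) * p l) * q j" if "i < m" "j < k" for i j
  proof -
    have "(M * X) $$ (i, j) = (\<Sum>l<n. M $$ (i, l) * (p l * q j))"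
      using M X that by (simp add: scalar_prod_def lessThan_atLeast0 pq)
    then show ?thesis by (simp add: sum_distrib_right mult.assoc)
  qed
  then show ?thesis using M X unfolding is_outer_product_def by auto
qed

lemma is_outer_product_mult_right:
  fixes M X :: "'a::comm_ring_1 mat"
  assumes X: "X \<in> carrier_mat m n" and M: "M \<in> carrier_mat n k" and "is_outer_product X"
  shows "is_outer_product (X * M)"
proof -
  obtain p q where pq: "\<And>i j. i < m \<Longrightarrow> j < n \<Longrightarrow> X $$ (i, j) = p i * q j"
    using assms(3) X unfolding is_outer_product_def by auto
  have "(X * M) $$ (i, j) = p i * (\<Sum>l<n. q l * M $$ (l, j))" if "i < m" "j < k" for i j
  proof -
    have "(X * M) $$ (i, j) = (\<Sum>l<n. p i * q l * M $$ (l, j))"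
      using M X that by (simp add: scalar_prod_def lessThan_atLeast0 pq)
    then show ?thesis by (simp add: sum_distrib_left mult.assoc)
  qed
  then show ?thesis using M X unfolding is_outer_product_def by auto
qed

lemma is_outer_product_shift_mat_diff:
  "is_outer_product (shift_mat n f - shift_mat n e)"
proof -
  have dims: "dim_row (shift_mat n f - shift_mat n e) = n" "dim_col (shift_mat n f - shift_mat n e) = n"
    by (simp_all add: shift_mat_def)
  have entry: "(shift_mat n f - shift_mat n e) $$ (i, j)
          = (if i = 0 then f - e else 0) * (if j = n - 1 then 1 else 0)" if "i < n" "j < n" for i j
    using that unfolding shift_mat_def by auto
  show ?thesis unfolding is_outer_product_def dims
    by (intro exI[of _ "\<lambda>i. if i = 0 then f - e else 0"] exI[of _ "\<lambda>j. if j = n - 1 then 1 else 0"]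
        allI impI entry)
qed

lemma is_outer_product_transpose_shift_mat_diff:
  "is_outer_product (transpose_mat (shift_mat n f) - transpose_mat (shift_mat n e))"
proof -
  have "transpose_mat (shift_mat n f) - transpose_mat (shift_mat n e)
          = transpose_mat (shift_mat n f - shift_mat n e)"
    by (intro eq_matI) (simp_all add: shift_mat_def)
  then show ?thesis
    using is_outer_product_transpose[OF is_outer_product_shift_mat_diff] by simp
qed

lemma rank_diff_le_rank_minus:
  fixes X Y :: "'a::field mat"
  assumes X: "X \<in> carrier_mat n nc" and Y: "Y \<in> carrier_mat n nc"
  shows "int (vec_space.rank n Y) - int (vec_space.rank n X) \<le> int (vec_space.rank n (Y - X))"
proof -
  have YX: "Y - X \<in> carrier_mat n nc" using X Y by auto
  have "vec_space.rank n (X + (Y - X)) \<le> vec_space.rank n X + vec_space.rank n (Y - X)"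
    by (rule vec_space.rank_subadditive[OF X YX])
  moreover have "X + (Y - X) = Y" using X Y by (intro eq_matI) auto
  ultimately show ?thesis by simp
qed

lemma disp_rank_diff_le_1:
  fixes A B C D M :: "'a::field mat"
  assumes "A \<in> carrier_mat n n" "B \<in> carrier_mat n n" "C \<in> carrier_mat n n"
    "D \<in> carrier_mat n n" "M \<in> carrier_mat n n"
    and "is_outer_product ((C * M - M * D) - (A * M - M * B))"
  shows "int (disp_rank n C D M) - int (disp_rank n A B M) \<le> 1"
proof -
  have AB: "A * M - M * B \<in> carrier_mat n n" and CD: "C * M - M * D \<in> carrier_mat n n"
    using assms by auto
  have "vec_space.rank n ((C * M - M * D) - (A * M - M * B)) \<le> 1"
    by (rule rank_le_1_if_outer_product[OF minus_carrier_mat[OF AB] assms(6)])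
  then show ?thesis
    using rank_diff_le_rank_minus[OF AB CD] unfolding disp_rank_def by linarith
qed

lemma disp_rank_change_right_le_1:
  fixes A B D M :: "'a::field mat"
  assumes A: "A \<in> carrier_mat n n" and B: "B \<in> carrier_mat n n"
    and D: "D \<in> carrier_mat n n" and M: "M \<in> carrier_mat n n"
    and "is_outer_product (B - D)"
  shows "int (disp_rank n A D M) - int (disp_rank n A B M) \<le> 1"
proof (rule disp_rank_diff_le_1[OF A B A D M])
  have "(A * M - M * D) - (A * M - M * B) = M * (B - D)"
    using A B D M by (intro eq_matI) (auto simp: mult_minus_distrib_mat[OF M B D] algebra_simps)
  then show "is_outer_product ((A * M - M * D) - (A * M - M * B))"
    using is_outer_product_mult_left[OF M minus_carrier_mat[OF D] assms(5)] by simp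
qed

lemma disp_rank_change_left_le_1:
  fixes A B C M :: "'a::field mat"
  assumes A: "A \<in> carrier_mat n n" and B: "B \<in> carrier_mat n n"
    and C: "C \<in> carrier_mat n n" and M: "M \<in> carrier_mat n n"
    and "is_outer_product (C - A)"
  shows "int (disp_rank n C B M) - int (disp_rank n A B M) \<le> 1"
proof (rule disp_rank_diff_le_1[OF A B C B M])
  have "(C * M - M * B) - (A * M - M * B) = (C - A) * M"
    using A B C M by (intro eq_matI) (auto simp: minus_mult_distrib_mat[OF C A M] algebra_simps)
  then show "is_outer_product ((C * M - M * B) - (A * M - M * B))"
    using is_outer_product_mult_right[OF minus_carrier_mat[OF A] M assms(5)] by simp
qed

theorem theorem3p2:
  fixes e f :: "'a::field" and A B C D M :: "'a mat" and n :: nat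
  assumes "n \<ge> 1"
    and "A \<in> carrier_mat n n" and "B \<in> carrier_mat n n" and "C \<in> carrier_mat n n"
    and "D \<in> carrier_mat n n" and "M \<in> carrier_mat n n"
  shows "(A = C \<and> B = shift_mat n e \<and> D = shift_mat n f
            \<longrightarrow> int (disp_rank n C D M) - int (disp_rank n A B M) \<le> 1)
       \<and> (A = C \<and> B = transpose_mat (shift_mat n e) \<and> D = transpose_mat (shift_mat n f)
            \<longrightarrow> int (disp_rank n C D M) - int (disp_rank n A B M) \<le> 1)
       \<and> (B = D \<and> A = shift_mat n e \<and> C = shift_mat n f
            \<longrightarrow> int (disp_rank n C D M) - int (disp_rank n A B M) \<le> 1)
       \<and> (B = D \<and> A = transpose_mat (shift_mat n e) \<and> C = transpose_mat (shift_mat n f)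
            \<longrightarrow> int (disp_rank n C D M) - int (disp_rank n A B M) \<le> 1)"
proof (intro conjI impI)
  assume "A = C \<and> B = shift_mat n e \<and> D = shift_mat n f"
  then show "int (disp_rank n C D M) - int (disp_rank n A B M) \<le> 1"
    using disp_rank_change_right_le_1[OF assms(2,3,5,6)]
      is_outer_product_shift_mat_diff[of n e f] by simp
next
  assume "A = C \<and> B = transpose_mat (shift_mat n e) \<and> D = transpose_mat (shift_mat n f)"
  then show "int (disp_rank n C D M) - int (disp_rank n A B M) \<le> 1"
    using disp_rank_change_right_le_1[OF assms(2,3,5,6)]
      is_outer_product_transpose_shift_mat_diff[of n e f] by simp
next
  assume "B = D \<and> A = shift_mat n e \<and> C = shift_mat n f"
  then show "int (disp_rank n C D M) - int (disp_rank n A B M) \<le> 1"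
    using disp_rank_change_left_le_1[OF assms(2,3,4,6)]
      is_outer_product_shift_mat_diff[of n f e] by simp
next
  assume "B = D \<and> A = transpose_mat (shift_mat n e) \<and> C = transpose_mat (shift_mat n f)"
  then show "int (disp_rank n C D M) - int (disp_rank n A B M) \<le> 1"
    using disp_rank_change_left_le_1[OF assms(2,3,4,6)]
      is_outer_product_transpose_shift_mat_diff[of n f e] by simp
qed

end
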